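(* MinPop Matching $g(\cdot),G(\cdot)$ can be computed recursively: $g(\varepsilon)=r$, $G(\varepsilon)=[\,]$; $g(\sharp)=r_\sharp$, $G(\sharp)=[\,]$. Otherwise write the string as $wc$ with last character $c$ and prefix $w$ (possibly $\varepsilon$ or $\sharp$), and let $u=g(w)$. Then $$g(wc)=h(u,c),\qquad G(wc)=G(w)+H(u,c).$$
   Context: Setting: WordPiece tokenization with vocabulary $V$ (a finite set of strings), suffix indicator string $\sharp$ (e.g. "##", possibly empty). A trie is built from $V$ with root $r$; $r_\sharp$ is the node representing $\sharp$. The trie may be augmented with two extra nodes representing $\sqcup$ and $\sharp\sqcup$, where $\sqcup$ is a whitespace character not in the vocabulary alphabet (these strings are not added to $V$). $\delta(u,c)$ is the child of $u$ along edge $c$, or null. $\chi_v$ is the string spelled from the root to node $v$; $\gamma_w$ is the node with $\chi_{\gamma_w}=w$, or null. The length of $w$ is $|w|$ if $w$ does not start with $\sharp$, else $|w|-|\sharp|$. $p_w$: longest (by this length) non-empty prefix $w'$ of $w$ with $w'\in V$, $w'\notin\{\varepsilon,\sharp\}$; if $w$ starts with $\sharp$, $p_w$ must also start with $\sharp$ (unless empty); $p_w=\varepsilon$ if none exists, and $p_\sharp=\varepsilon$. $q_w:=\sharp w''$ where $w=p_w w''$. MinPop Matching: $(g(w),G(w)) := (\gamma_w,[\,])$ if $\gamma_w\neq\mathrm{null}$; else $(\mathrm{null},[\,])$ if $p_w=\varepsilon$; else $(g(q_w),\,[p_w]+G(q_w))$. One-step MinPop Matching: $(h(u,c),H(u,c))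 := (\mathrm{null},[\,])$ if $u=\mathrm{null}$; otherwise $(g(\chi_u c),\,G(\chi_u c))$. *)

theory Defs
  imports Main "HOL-Library.Sublist"
begin

(* Strings are lists of characters of type 'a.  A trie node is identified with the
   string chi_v it spells; "null" is None.  So nodes/null are  'a list option. *)

definition trie_nodes :: "'a list set \<Rightarrow> 'a list \<Rightarrow> 'a \<Rightarrow> bool \<Rightarrow> 'a list set" where
  "trie_nodes V sharp ws aug =
     {[]} \<union> {u. \<exists>v \<in> V \<union> (if aug then {[ws], sharp @ [ws]} else {}). prefix u v}"

definition gam :: "'a list set \<Rightarrow> 'a list \<Rightarrow> 'a list option" where
  "gam N w = (if w \<in> N then Some w else None)"

definition delta :: "'a list set \<Rightarrow> 'a list option \<Rightarrow> 'a \<Rightarrow> 'a list option" where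
  "delta N u c = (case u of None \<Rightarrow> None | Some s \<Rightarrow> gam N (s @ [c]))"

definition slen :: "'a list \<Rightarrow> 'a list \<Rightarrow> nat" where
  "slen sharp w = (if prefix sharp w then length w - length sharp else length w)"

definition cand :: "'a list set \<Rightarrow> 'a list \<Rightarrow> 'a list \<Rightarrow> 'a list \<Rightarrow> bool" where
  "cand V sharp w w' \<longleftrightarrow> prefix w' w \<and> w' \<in> V \<and> w' \<noteq> [] \<and> w' \<noteq> sharp
      \<and> (prefix sharp w \<longrightarrow> prefix sharp w')"

definition pw :: "'a list set \<Rightarrow> 'a list \<Rightarrow> 'a list \<Rightarrow> 'a list" where
  "pw V sharp w =
    (if w = sharp \<or> \<not> (\<exists>w'. cand V sharp w w') then []
     else (THE w'. cand V sharp w w' \<and> (\<forall>w''. cand V sharp w w'' \<longrightarrow> slen sharp w'' \<le> slen sharp w')))"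

definition qw :: "'a list set \<Rightarrow> 'a list \<Rightarrow> 'a list \<Rightarrow> 'a list" where
  "qw V sharp w = sharp @ drop (length (pw V sharp w)) w"

lemma cand_eq:
  assumes "cand V sharp w a" "cand V sharp w b" "slen sharp a = slen sharp b"
  shows "a = b"
proof -
  have pa: "prefix a w" and pb: "prefix b w" using assms unfolding cand_def by auto
  have "length a = length b"
  proof (cases "prefix sharp w")
    case True
    then have "prefix sharp a" "prefix sharp b" using assms unfolding cand_def by auto
    moreover have "length sharp \<le> length a" "length sharp \<le> length b"
      using calculation by (auto intro: prefix_length_le)
    ultimately show ?thesis using assms(3) \<open>prefix sharp w\<close> unfolding slen_def by auto
  next
    case False
    then have "\<not> prefix sharp a" "\<not> prefix sharp b" using pa pb
      by (meson prefix_order.trans)+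
    then show ?thesis using assms(3) unfolding slen_def by auto
  qed
  then show ?thesis using pa pb
    by (metis prefix_length_prefix prefix_order.antisym order_refl)
qed

lemma pw_cand:
  assumes "pw V sharp w \<noteq> []"
  shows "cand V sharp w (pw V sharp w)"
proof -
  have ex: "\<exists>w'. cand V sharp w w'" and ns: "w \<noteq> sharp"
    using assms unfolding pw_def by (auto split: if_splits)
  let ?S = "{w'. cand V sharp w w'}"
  have fin: "finite ?S"
    by (rule finite_subset[of _ "set (prefixes w)"]) (auto simp: cand_def)
  have ne: "?S \<noteq> {}" using ex by auto
  obtain m where m: "m \<in> ?S" "\<forall>x\<in>?S. slen sharp x \<le> slen sharp m"
  proof -
    have "Max (slen sharp ` ?S) \<in> slen sharp ` ?S" using fin ne by simp
    then obtain m where "m \<in> ?S" "slen sharp m = Max (slen sharp ` ?S)" by auto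
    moreover have "\<forall>x\<in>?S. slen sharp x \<le> Max (slen sharp ` ?S)" using fin by simp
    ultimately show ?thesis using that by auto
  qed
  have "\<exists>!w'. cand V sharp w w' \<and> (\<forall>w''. cand V sharp w w'' \<longrightarrow> slen sharp w'' \<le> slen sharp w')"
  proof (rule ex1I[of _ m])
    show "cand V sharp w m \<and> (\<forall>w''. cand V sharp w w'' \<longrightarrow> slen sharp w'' \<le> slen sharp m)" using m by auto
  next
    fix y assume y: "cand V sharp w y \<and> (\<forall>w''. cand V sharp w w'' \<longrightarrow> slen sharp w'' \<le> slen sharp y)"
    then have "slen sharp y = slen sharp m" using m by (meson le_antisym mem_Collect_eq)
    then show "y = m" using y m cand_eq by blast
  qed
  from theI'[OF this] show ?thesis using ex ns unfolding pw_def by auto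
qed

lemma qw_less:
  assumes "pw V sharp w \<noteq> []"
  shows "slen sharp (qw V sharp w) < slen sharp w"
proof -
  let ?p = "pw V sharp w"
  have c: "cand V sharp w ?p" using pw_cand[OF assms] .
  then have pp: "prefix ?p w" and ps: "?p \<noteq> sharp" and sh: "prefix sharp w \<longrightarrow> prefix sharp ?p"
    unfolding cand_def by auto
  have le: "length ?p \<le> length w" using pp by (rule prefix_length_le)
  have q: "slen sharp (qw V sharp w) = length w - length ?p"
    unfolding slen_def qw_def by simp
  show ?thesis
  proof (cases "prefix sharp w")
    case True
    then have "prefix sharp ?p" using sh by auto
    then have "length sharp < length ?p" using ps
      by (metis prefix_length_le prefix_length_prefix prefix_order.antisym prefix_order.refl le_neq_implies_less pp)
    then show ?thesis using True q le unfolding slen_def by auto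
  next
    case False
    then show ?thesis using q le assms unfolding slen_def by (cases ?p) auto
  qed
qed

function minpop :: "'a list set \<Rightarrow> 'a list set \<Rightarrow> 'a list \<Rightarrow> 'a list \<Rightarrow> 'a list option \<times> 'a list list" where
  "minpop N V sharp w =
     (if gam N w \<noteq> None then (gam N w, [])
      else if pw V sharp w = [] then (None, [])
      else (fst (minpop N V sharp (qw V sharp w)),
            pw V sharp w # snd (minpop N V sharp (qw V sharp w))))"
  by auto
termination
  by (relation "measure (\<lambda>(N, V, sharp, w). slen sharp w)") (auto intro: qw_less)

declare minpop.simps[simp del]

definition g_mp :: "'a list set \<Rightarrow> 'a list set \<Rightarrow> 'a list \<Rightarrow> 'a list \<Rightarrow> 'a list option" where
  "g_mp N V sharp w = fst (minpop N V sharp w)"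

definition G_mp :: "'a list set \<Rightarrow> 'a list set \<Rightarrow> 'a list \<Rightarrow> 'a list \<Rightarrow> 'a list list" where
  "G_mp N V sharp w = snd (minpop N V sharp w)"

definition onestep :: "'a list set \<Rightarrow> 'a list set \<Rightarrow> 'a list \<Rightarrow> 'a list option \<Rightarrow> 'a \<Rightarrow> 'a list option \<times> 'a list list" where
  "onestep N V sharp u c = (case u of None \<Rightarrow> (None, []) | Some s \<Rightarrow> minpop N V sharp (s @ [c]))"

definition h_mp where "h_mp N V sharp u c = fst (onestep N V sharp u c)"
definition H_mp where "H_mp N V sharp u c = snd (onestep N V sharp u c)"

end

theory Submission
  imports Defs
begin

(* If w is a trie node, one step from g(w) = w is by definition the matching of wc.
   Otherwise wc is not a node either, since the trie is prefix-closed; in particular wc is not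
   a vocabulary word, so wc has the same longest vocabulary prefix p_w as w, and popping it
   leaves q_w c.  Induction along the pops performed on w then gives the recursion. *)

lemma trie_nodes_prefix_closed:
  assumes "x \<in> trie_nodes V sharp ws aug" "prefix y x"
  shows "y \<in> trie_nodes V sharp ws aug"
proof (cases "x = []")
  case False
  then obtain v where "v \<in> V \<union> (if aug then {[ws], sharp @ [ws]} else {})" "prefix x v"
    using assms(1) unfolding trie_nodes_def by blast
  with assms(2) show ?thesis unfolding trie_nodes_def using prefix_order.trans by blast
qed (use assms in \<open>simp add: trie_nodes_def\<close>)

lemma vocab_subset_trie_nodes: "V \<subseteq> trie_nodes V sharp ws aug"
  unfolding trie_nodes_def by auto

lemma Nil_in_trie_nodes: "[] \<in> trie_nodes V sharp ws aug"
  unfolding trie_nodes_def by simp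

lemma cand_snoc:
  assumes "w @ [c] \<notin> V" "w @ [c] \<noteq> sharp"
  shows "cand V sharp (w @ [c]) = cand V sharp w"
proof
  fix x
  have "prefix sharp (w @ [c]) \<longleftrightarrow> prefix sharp w"
    using assms(2) by (auto simp: prefix_snoc)
  moreover have "x \<in> V \<Longrightarrow> prefix x (w @ [c]) \<longleftrightarrow> prefix x w"
    using assms(1) by (auto simp: prefix_snoc)
  ultimately show "cand V sharp (w @ [c]) x = cand V sharp w x"
    unfolding cand_def by blast
qed

lemma pw_snoc:
  assumes "w @ [c] \<notin> V" "w @ [c] \<noteq> sharp"
  shows "pw V sharp (w @ [c]) = pw V sharp w"
proof -
  have "\<not> cand V sharp sharp x" for x
    unfolding cand_def using prefix_order.antisym by blast
  then show ?thesis
    unfolding pw_def cand_snoc[OF assms] using assms(2) by auto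
qed

lemma pw_length_le: "length (pw V sharp w) \<le> length w"
  using pw_cand[of V sharp w] unfolding cand_def
  by (cases "pw V sharp w = []") (auto intro: prefix_length_le)

lemma qw_snoc:
  assumes "w @ [c] \<notin> V" "w @ [c] \<noteq> sharp"
  shows "qw V sharp (w @ [c]) = qw V sharp w @ [c]"
  unfolding qw_def pw_snoc[OF assms] using pw_length_le[of V sharp w] by simp

lemma qw_snoc_neq_sharp: "qw V sharp w @ [c] \<noteq> sharp"
proof
  assume "qw V sharp w @ [c] = sharp"
  then have "length (qw V sharp w) < length sharp" by (metis length_append_singleton lessI)
  then show False unfolding qw_def by simp
qed

lemma minpop_node: "w \<in> N \<Longrightarrow> minpop N V sharp w = (Some w, [])"
  by (subst minpop.simps) (simp add: gam_def)

lemma minpop_not_node: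
  "w \<notin> N \<Longrightarrow> minpop N V sharp w =
     (if pw V sharp w = [] then (None, [])
      else (g_mp N V sharp (qw V sharp w), pw V sharp w # G_mp N V sharp (qw V sharp w)))"
  by (subst minpop.simps) (simp add: gam_def g_mp_def G_mp_def)

lemma minpop_sharp: "minpop N V sharp sharp = (gam N sharp, [])"
  by (subst minpop.simps) (simp add: pw_def)

lemma minpop_snoc:
  assumes prefix_closed: "\<And>x y. x \<in> N \<Longrightarrow> prefix y x \<Longrightarrow> y \<in> N"
    and vocab: "V \<subseteq> N"
    and "w @ [c] \<noteq> sharp"
  shows "minpop N V sharp (w @ [c]) =
    (h_mp N V sharp (g_mp N V sharp w) c, G_mp N V sharp w @ H_mp N V sharp (g_mp N V sharp w) c)"
  using assms(3)
proof (induction "slen sharp w" arbitrary: w rule: less_induct)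
  case less
  show ?case
  proof (cases "w \<in> N")
    case True
    then show ?thesis
      by (simp add: minpop_node g_mp_def G_mp_def h_mp_def H_mp_def onestep_def)
  next
    case False
    then have "w @ [c] \<notin> N" using prefix_closed[of "w @ [c]" w] by auto
    then have wc_not_vocab: "w @ [c] \<notin> V" using vocab by blast
    note pw_eq = pw_snoc[OF wc_not_vocab "less.prems"]
    note qw_eq = qw_snoc[OF wc_not_vocab "less.prems"]
    show ?thesis
    proof (cases "pw V sharp w = []")
      case True
      then have "minpop N V sharp w = (None, [])" "minpop N V sharp (w @ [c]) = (None, [])"
        using minpop_not_node[OF False] minpop_not_node[OF \<open>w @ [c] \<notin> N\<close>] pw_eq by simp_all
      then show ?thesis
        by (simp add: g_mp_def G_mp_def h_mp_def H_mp_def onestep_def)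
    next
      case popped: False
      let ?q = "qw V sharp w" and ?p = "pw V sharp w"
      have "minpop N V sharp w = (g_mp N V sharp ?q, ?p # G_mp N V sharp ?q)"
        using minpop_not_node[OF False] popped by simp
      moreover have "minpop N V sharp (w @ [c]) =
          (g_mp N V sharp (?q @ [c]), ?p # G_mp N V sharp (?q @ [c]))"
        using minpop_not_node[OF \<open>w @ [c] \<notin> N\<close>] popped pw_eq qw_eq by simp
      moreover have "minpop N V sharp (?q @ [c]) =
          (h_mp N V sharp (g_mp N V sharp ?q) c,
           G_mp N V sharp ?q @ H_mp N V sharp (g_mp N V sharp ?q) c)"
        using less.hyps[OF qw_less[OF popped] qw_snoc_neq_sharp] .
      ultimately show ?thesis by (simp add: g_mp_def G_mp_def)
    qed
  qed
qed

theorem lemma3: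
  fixes V :: "'a list set" and sharp :: "'a list" and ws :: 'a and aug :: bool
  defines "N \<equiv> trie_nodes V sharp ws aug"
  assumes "finite V"
    and "\<forall>v\<in>V. ws \<notin> set v"
    and "ws \<notin> set sharp"
  shows "g_mp N V sharp [] = Some [] \<and> G_mp N V sharp [] = []
       \<and> g_mp N V sharp sharp = gam N sharp \<and> G_mp N V sharp sharp = []
       \<and> (\<forall>w c. w @ [c] \<noteq> sharp \<longrightarrow>
            (let u = g_mp N V sharp w in
               g_mp N V sharp (w @ [c]) = h_mp N V sharp u c
             \<and> G_mp N V sharp (w @ [c]) = G_mp N V sharp w @ H_mp N V sharp u c))"
proof -
  have prefix_closed: "\<And>x y. x \<in> N \<Longrightarrow> prefix y x \<Longrightarrow> y \<in> N"
    unfolding N_def by (rule trie_nodes_prefix_closed)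
  have vocab: "V \<subseteq> N" unfolding N_def by (rule vocab_subset_trie_nodes)
  have "minpop N V sharp [] = (Some [], [])"
    unfolding N_def by (rule minpop_node[OF Nil_in_trie_nodes])
  then show ?thesis
    using minpop_snoc[OF prefix_closed vocab] minpop_sharp[of N V sharp]
    by (simp add: g_mp_def G_mp_def Let_def)
qed

end
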